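(* Let $f=1_{[0,1]}$ and let $\gamma<1$ (with $\gamma>0$). For each $n$, let $N$ be a Poisson process on $\mathbb{R}$ with intensity $nf$ with respect to Lebesgue measure. Then there exist $\delta<1$ and a constant $c>0$, both independent of $n$, such that for all $n$ large enough $$\mathbb{E}\big(\|\tilde f^H_{n,\gamma}-f\|_2^2\big)\ge\frac{c}{n^\delta}.$$
   Context: Haar basis: $\phi=1_{[0,1]}$, $\psi=1_{[0,1/2]}-1_{(1/2,1]}$, $\phi_k(x)=\phi(x-k)$, $\psi_{j,k}(x)=2^{j/2}\psi(2^jx-k)$ ($j\ge0$, $k\in\mathbb{Z}$). $\Lambda=\{(j,k):j\ge-1,k\in\mathbb{Z}\}$; $\varphi_\lambda=\phi_k$ if $\lambda=(-1,k)$ and $\varphi_\lambda=\psi_{j,k}$ if $\lambda=(j,k)$, $j\ge0$. Define $\hat\beta_\lambda=\frac1n\sum_{T\in N}\varphi_\lambda(T)$, $\hat V_{\lambda,n}=\frac1{n^2}\sum_{T\in N}\varphi_\lambda^2(T)$, $$\tilde V_{\lambda,n}=\hat V_{\lambda,n}+\sqrt{2\gamma\ln n\,\hat V_{\lambda,n}\frac{\|\varphi_\lambda\|_\infty^2}{n^2}}+3\gamma\ln n\frac{\|\varphi_\lambda\|_\infty^2}{n^2},\qquad \eta_{\lambda,\gamma}=\sqrt{2\gamma\tilde V_{\lambda,n}\ln n}+\frac{\gamma\ln n}{3n}\|\varphi_\lambda\|_\infty.$$ Let $j_0$ be the integer with $2^{j_0}\le n<2^{j_0+1}$ and $\Gamma_n=\{(j,k)\in\Lambda: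 j\le j_0\}$. The estimator is $\tilde f^H_{n,\gamma}=\sum_{\lambda\in\Gamma_n}\hat\beta_\lambda 1_{\{|\hat\beta_\lambda|\ge\eta_{\lambda,\gamma}\}}\varphi_\lambda$. *)

theory Defs
  imports "HOL-Probability.Probability" "HOL-Library.Multiset"
begin

definition haar_phi :: "real \<Rightarrow> real" where
  "haar_phi x = indicator {0..1} x"

definition haar_psi :: "real \<Rightarrow> real" where
  "haar_psi x = indicator {0..1/2} x - indicator {1/2<..1} x"

definition Lambda :: "(int \<times> int) set" where
  "Lambda = {(j, k). j \<ge> -1}"

definition haar :: "int \<times> int \<Rightarrow> real \<Rightarrow> real" where
  "haar lam x = (case lam of (j, k) \<Rightarrow>
     if j = -1 then haar_phi (x - real_of_int k)
     else 2 powr (real_of_int j / 2) * haar_psi (2 powr (real_of_int j) * x - real_of_int k))"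

definition sup_norm :: "(real \<Rightarrow> real) \<Rightarrow> real" where
  "sup_norm g = (SUP x. \<bar>g x\<bar>)"

definition beta_hat :: "real \<Rightarrow> real multiset \<Rightarrow> int \<times> int \<Rightarrow> real" where
  "beta_hat n N lam = (1 / n) * (\<Sum>T\<in>#N. haar lam T)"

definition V_hat :: "real \<Rightarrow> real multiset \<Rightarrow> int \<times> int \<Rightarrow> real" where
  "V_hat n N lam = (1 / n\<^sup>2) * (\<Sum>T\<in>#N. (haar lam T)\<^sup>2)"

definition V_tilde :: "real \<Rightarrow> real \<Rightarrow> real multiset \<Rightarrow> int \<times> int \<Rightarrow> real" where
  "V_tilde gamma n N lam =
     V_hat n N lam
     + sqrt (2 * gamma * ln n * V_hat n N lam * (sup_norm (haar lam))\<^sup>2 / n\<^sup>2)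
     + 3 * gamma * ln n * (sup_norm (haar lam))\<^sup>2 / n\<^sup>2"

definition eta :: "real \<Rightarrow> real \<Rightarrow> real multiset \<Rightarrow> int \<times> int \<Rightarrow> real" where
  "eta gamma n N lam =
     sqrt (2 * gamma * V_tilde gamma n N lam * ln n)
     + gamma * ln n / (3 * n) * sup_norm (haar lam)"

definition j0 :: "real \<Rightarrow> int" where
  "j0 n = (THE j. 2 powr (real_of_int j) \<le> n \<and> n < 2 powr (real_of_int j + 1))"

definition Gamma_n :: "real \<Rightarrow> (int \<times> int) set" where
  "Gamma_n n = {(j, k) \<in> Lambda. j \<le> j0 n}"

text \<open>The estimator; for each x only finitely many summands are nonzero.\<close>
definition f_tilde_H :: "real \<Rightarrow> real \<Rightarrow> real multiset \<Rightarrow> real \<Rightarrow> real" where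
  "f_tilde_H n gamma N x =
     infsum (\<lambda>lam. (if \<bar>beta_hat n N lam\<bar> \<ge> eta gamma n N lam then beta_hat n N lam else 0)
                    * haar lam x) (Gamma_n n)"

definition count_in :: "real set \<Rightarrow> real multiset \<Rightarrow> nat" where
  "count_in A N = size (filter_mset (\<lambda>x. x \<in> A) N)"

text \<open>Realisations are finite point configurations (multisets),
  which is adequate for a finite intensity measure.\<close>
definition poisson_process ::
  "'w measure \<Rightarrow> ('w \<Rightarrow> real multiset) \<Rightarrow> (real \<Rightarrow> real) \<Rightarrow> bool" where
  "poisson_process M N h \<longleftrightarrow>
     prob_space M \<and>
     (\<forall>A \<in> sets borel.
        (\<lambda>\<omega>. count_in A (N \<omega>)) \<in> measurable M (count_space UNIV) \<and>
        (\<forall>k::nat. measure M {\<omega> \<in> space M. count_in A (N \<omega>) = k}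
           = (set_lebesgue_integral lborel A h) ^ k / fact k
             * exp (- set_lebesgue_integral lborel A h))) \<and>
     (\<forall>(I::nat set) A. finite I \<longrightarrow> (\<forall>i\<in>I. A i \<in> sets borel) \<longrightarrow> disjoint_family_on A I \<longrightarrow>
        prob_space.indep_vars M (\<lambda>_. count_space UNIV) (\<lambda>i \<omega>. count_in (A i) (N \<omega>)) I)"

end

theory Submission
  imports Defs "HOL-Real_Asymp.Real_Asymp"
begin

text \<open>Since \<open>f = 1_{[0,1]}\<close> has vanishing Haar coefficients at all levels \<open>j \<ge> 0\<close>, every
  detail coefficient the estimator keeps is pure error, and by a Bessel-type inequality the sum of
  their squares bounds the \<open>L\<^sup>2\<close> loss from below. Choose a level \<open>j\<close> whose half-cells carry Poisson
  mean \<open>\<mu> = n/2^(j+1) \<asymp> n^\<epsilon>\<close>. The coefficient of \<open>\<psi>_{j,k}\<close> passes the threshold as soon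
  as the counts in the two halves of its support are \<open>\<mu> \<plusminus> sqrt(\<gamma>\<^sub>1 \<mu> ln n)\<close> for some
  \<open>\<gamma> < \<gamma>\<^sub>1\<close>; by independence and a Stirling-type lower bound for Poisson probabilities this
  happens with probability at least \<open>n^(-\<gamma>\<^sub>2) / poly(\<mu>)\<close>, \<open>\<gamma>\<^sub>1 < \<gamma>\<^sub>2 < 1\<close>, and then the
  coefficient contributes \<open>2^j/n\<^sup>2\<close>. Summing over the \<open>2^j \<asymp> n^(1-\<epsilon>)\<close> cells gives a bound
  \<open>c n^(-\<delta>)\<close> with \<open>\<delta> = \<gamma>\<^sub>2 + 4\<epsilon> < 1\<close>.\<close>

section \<open>Lower bounds for Poisson probabilities\<close>

lemma ln_ge_quadratic:
  fixes x :: real assumes "1 \<le> x"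
  shows "x - 1 - (x - 1)^2/2 \<le> ln x"
proof -
  have "(\<lambda>y. (y - 1 - (y-1)^2/2) - ln y) x \<le> (\<lambda>y. (y - 1 - (y-1)^2/2) - ln y) 1"
  proof (rule DERIV_nonpos_imp_nonincreasing[OF assms])
    fix z :: real assume z: "1 \<le> z" "z \<le> x"
    show "\<exists>D. ((\<lambda>y. (y - 1 - (y-1)^2/2) - ln y) has_real_derivative D) (at z) \<and> D \<le> 0"
    proof (intro exI conjI)
      show "((\<lambda>y. (y - 1 - (y-1)^2/2) - ln y) has_real_derivative (1 - (z - 1) - 1/z)) (at z)"
        using z by (auto intro!: derivative_eq_intros simp: field_simps power2_eq_square)
      have "z * (2 - z) = 1 - (z-1)^2" by (simp add: power2_eq_square algebra_simps)
      then have "z * (2 - z) \<le> 1" by simp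
      then show "1 - (z - 1) - 1/z \<le> 0" using z by (simp add: field_simps)
    qed
  qed
  then show ?thesis by simp
qed

lemma ln_le_half_diff_inverse:
  fixes x :: real assumes "1 \<le> x"
  shows "ln x \<le> (x - 1/x)/2"
proof -
  have "(\<lambda>y. ln y - (y - 1/y)/2) x \<le> (\<lambda>y. ln y - (y - 1/y)/2) 1"
  proof (rule DERIV_nonpos_imp_nonincreasing[OF assms])
    fix z :: real assume z: "1 \<le> z" "z \<le> x"
    show "\<exists>D. ((\<lambda>y. ln y - (y - 1/y)/2) has_real_derivative D) (at z) \<and> D \<le> 0"
    proof (intro exI conjI)
      show "((\<lambda>y. ln y - (y - 1/y)/2) has_real_derivative (1/z - (1 + 1/z^2)/2)) (at z)"
        using z by (auto intro!: derivative_eq_intros simp: field_simps power2_eq_square)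
      have "0 \<le> (z-1)^2" by simp
      then show "1/z - (1 + 1/z^2)/2 \<le> 0" using z by (simp add: field_simps power2_eq_square)
    qed
  qed
  then show ?thesis by simp
qed

definition poisson_rate :: "real \<Rightarrow> real \<Rightarrow> real" where
  "poisson_rate mu a = a * ln (a / mu) - a + mu"

lemma poisson_rate_above_mean:
  assumes "0 < mu" "mu \<le> a"
  shows "poisson_rate mu a \<le> (a - mu)^2 / (2 * mu)"
proof -
  define y where "y = a / mu"
  have y: "1 \<le> y" and a: "a = mu * y" using assms by (simp_all add: y_def field_simps)
  have "mu * y * ln y \<le> mu * y * ((y - 1/y)/2)"
    using assms y ln_le_half_diff_inverse[OF y] by (intro mult_left_mono) auto
  also have "\<dots> = mu * (y^2 - 1)/2" using y by (simp add: field_simps power2_eq_square)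
  finally have "mu * y * ln y \<le> mu * (y^2 - 1)/2" .
  moreover have "poisson_rate mu a = mu * y * ln y - mu * y + mu"
    unfolding poisson_rate_def a using assms by (simp add: y_def)
  moreover have "mu * (y^2 - 1)/2 - mu * y + mu = (a - mu)^2 / (2 * mu)"
    using assms by (simp add: a field_simps power2_eq_square)
  ultimately show ?thesis by linarith
qed

lemma poisson_rate_below_mean:
  assumes "0 < a" "a \<le> mu"
  shows "poisson_rate mu a \<le> (mu - a)^2 / (2 * a)"
proof -
  define x where "x = mu / a"
  have x: "1 \<le> x" and m: "mu = a * x" using assms by (simp_all add: x_def field_simps)
  have "ln (a / mu) = - ln x" using assms by (simp add: x_def ln_div)
  then have "poisson_rate mu a = a * (x - 1 - ln x)" unfolding poisson_rate_def by (simp add: m algebra_simps)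
  also have "\<dots> \<le> a * ((x-1)^2/2)"
    using ln_ge_quadratic[OF x] assms by (intro mult_left_mono) auto
  also have "\<dots> = (mu - a)^2 / (2 * a)" using assms by (simp add: m field_simps power2_eq_square)
  finally show ?thesis .
qed

lemma exp_le_one_plus_inverse_power:
  assumes "1 \<le> n"
  shows "exp 1 \<le> (1 + 1/real n) ^ (n + 1)"
proof -
  have n: "real n \<ge> 1" using assms by simp
  have "ln (1/(1 + 1/real n)) \<le> 1/(1 + 1/real n) - 1"
    using n by (intro ln_le_minus_one) (simp add: add_pos_pos)
  moreover have "ln (1/(1 + 1/real n)) = - ln (1 + 1/real n)" using n by (simp add: ln_div)
  moreover have "1/(1 + 1/real n) - 1 = - 1/(real n + 1)" using n by (simp add: field_simps)
  ultimately have "1 \<le> (real n + 1) * ln (1 + 1/real n)" using n by (simp add: field_simps)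
  then have "exp 1 \<le> exp ((real n + 1) * ln (1 + 1/real n))" by simp
  also have "\<dots> = (1 + 1/real n) powr (real n + 1)"
    using n by (simp add: powr_def add_pos_pos less_imp_neq[symmetric])
  also have "\<dots> = (1 + 1/real n) ^ (n + 1)"
    using n powr_realpow[of "1 + 1/real n" "n + 1"] by (simp add: add_pos_pos add.commute)
  finally show ?thesis .
qed

lemma fact_le_exp_power:
  "n \<ge> 1 \<Longrightarrow> fact n \<le> exp 1 * real n ^ (n+1) * exp (- real n)"
proof (induction n rule: dec_induct)
  case base then show ?case by (simp add: exp_minus)
next
  case (step n)
  have n: "real n \<ge> 1" using step by simp
  have e: "exp 1 * real n ^ (n+1) \<le> (real n + 1) ^ (n+1)"
    using exp_le_one_plus_inverse_power[OF step(1)] n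
    by (simp add: field_simps power_divide)
  have "fact (Suc n) = (real n + 1) * fact n" by simp
  also have "\<dots> \<le> (real n + 1) * (exp 1 * real n ^ (n+1) * exp (- real n))"
    using step by (intro mult_left_mono) auto
  also have "\<dots> = (exp 1 * real n ^ (n+1)) * (real n + 1) * exp (- real n)" by simp
  also have "\<dots> \<le> (real n + 1) ^ (n+1) * (real n + 1) * exp (- real n)"
    using e by (intro mult_right_mono) auto
  also have "\<dots> = exp 1 * real (Suc n) ^ (Suc n + 1) * exp (- real (Suc n))"
    by (simp add: exp_diff exp_minus field_simps)
  finally show ?case .
qed

lemma poisson_pmf_ge_exp_rate:
  assumes "0 < mu" "a \<ge> 1"
  shows "exp (- poisson_rate mu (real a)) / (exp 1 * real a) \<le> mu ^ a / fact a * exp (- mu)"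
proof -
  have ra: "real a \<ge> 1" using assms by simp
  have "- poisson_rate mu (real a) = real a * ln mu + real a - mu - real a * ln (real a)"
    unfolding poisson_rate_def using assms ra by (simp add: ln_div algebra_simps)
  then have "exp (- poisson_rate mu (real a))
      = exp (real a * ln mu) * exp (real a) / exp mu / exp (real a * ln (real a))"
    by (simp only: exp_add exp_diff)
  also have "\<dots> = exp (real a * ln mu) * exp (- mu) * exp (real a) / exp (real a * ln (real a))"
    by (simp add: exp_minus field_simps)
  also have "\<dots> = mu ^ a * exp (- mu) * exp (real a) / real a ^ a"
    using assms ra by (simp add: exp_of_nat_mult)
  finally have "exp (- poisson_rate mu (real a)) / (exp 1 * real a)
      = mu ^ a * exp (- mu) / (exp 1 * real a ^ (a+1) * exp (- real a))"
    using ra assms(1) by (simp add: exp_minus field_simps)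
  also have "\<dots> \<le> mu ^ a * exp (- mu) / fact a"
    using fact_le_exp_power[OF assms(2)] assms by (intro divide_left_mono) auto
  finally show ?thesis by simp
qed

section \<open>Haar functions on a dyadic grid\<close>

lemma int_div_eq_iff:
  fixes m q c :: int assumes "0 < q"
  shows "m div q = c \<longleftrightarrow> c*q \<le> m \<and> m < c*q + q"
proof
  assume "m div q = c"
  moreover have "q * (m div q) + m mod q = m" by simp
  moreover have "0 \<le> m mod q" "m mod q < q" using assms by auto
  ultimately show "c*q \<le> m \<and> m < c*q + q"
    by (metis add.commute add_less_cancel_left le_add_same_cancel1 mult.commute)
next
  assume h: "c*q \<le> m \<and> m < c*q + q"
  then have "(m - c*q) div q = 0" by (simp add: div_pos_pos_trivial)
  moreover have "(m - c*q) div q = m div q - c" using assms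
    by (metis add_diff_cancel_left' diff_add_cancel div_mult_self1 less_irrefl mult.commute)
  ultimately show "m div q = c" by simp
qed

lemma between_ints_iff:
  fixes X :: real and m A B :: int
  assumes "m < X" "X < m + 1"
  shows "(A \<le> X \<and> X \<le> B) \<longleftrightarrow> (A \<le> m \<and> m + 1 \<le> B)"
    and "(A < X \<and> X \<le> B) \<longleftrightarrow> (A \<le> m \<and> m + 1 \<le> B)"
proof -
  have "A \<le> X \<longleftrightarrow> A \<le> m" "A < X \<longleftrightarrow> A \<le> m" "X \<le> B \<longleftrightarrow> m + 1 \<le> B"
    using assms by (smt (verit, best) of_int_le_iff of_int_1 of_int_add zle_add1_eq_le)+
  then show "(A \<le> X \<and> X \<le> B) \<longleftrightarrow> (A \<le> m \<and> m + 1 \<le> B)"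
    and "(A < X \<and> X \<le> B) \<longleftrightarrow> (A \<le> m \<and> m + 1 \<le> B)" by blast+
qed

lemma sum_lessThan_mult_blocks:
  fixes g :: "nat \<Rightarrow> 'a::comm_monoid_add"
  shows "(\<Sum>i<n*k. g i) = (\<Sum>b<n. \<Sum>l<k. g (b*k + l))"
proof -
  have "(\<Sum>i<n*k. g i) = (\<Sum>b<n. sum g {b*k..<b*k+k})" by (simp add: sum.nat_group)
  also have "\<dots> = (\<Sum>b<n. \<Sum>l<k. g (b*k + l))"
  proof (rule sum.cong[OF refl])
    fix b
    have "sum g {0 + b*k..<k + b*k} = (\<Sum>l\<in>{0..<k}. g (l + b*k))" by (rule sum.shift_bounds_nat_ivl)
    then show "sum g {b*k..<b*k+k} = (\<Sum>l<k. g (b*k + l))" by (simp add: atLeast0LessThan add.commute)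
  qed
  finally show ?thesis .
qed

lemma div_mult_block:
  fixes k :: int and P r :: nat
  assumes "i < 2*P" "0 < P"
  shows "(2*int P*k + int i) div (2*int P*int r) = k div int r"
proof -
  have "(2*int P*k + int i) div (2*int P) = k"
    using assms by (subst int_div_eq_iff) (auto simp: algebra_simps)
  then show ?thesis by (simp add: zdiv_zmult2_eq)
qed

text \<open>\<open>haar_sign r\<close> is the value of \<open>\<psi>\<close> on \<open>[r/2, (r+1)/2[\<close>, up to the endpoints.\<close>
definition haar_sign :: "int \<Rightarrow> real" where
  "haar_sign r = (if r = 0 then 1 else if r = 1 then -1 else 0)"

lemma haar_sign_half_block:
  fixes i P :: nat
  assumes "0 < P" "i < 2*P"
  shows "i div P = 0 \<or> i div P = 1"
proof -
  have "i div P < 2" using assms by (simp add: div_less_iff_less_mult mult.commute)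
  then show ?thesis by linarith
qed

lemma sum_haar_sign_block:
  assumes "0 < q"
  shows "(\<Sum>l<2*q. haar_sign (2*e + int (l div q))) = 0"
proof -
  have "(\<Sum>l<2*q. haar_sign (2*e + int (l div q)))
      = (\<Sum>b<2. \<Sum>l<q. haar_sign (2*e + int ((b*q + l) div q)))"
    by (rule sum_lessThan_mult_blocks)
  also have "\<dots> = real q * (haar_sign (2*e) + haar_sign (2*e + 1))"
    by (simp add: numeral_2_eq_2 algebra_simps)
  also have "haar_sign (2*e) + haar_sign (2*e + 1) = 0" by (auto simp: haar_sign_def)
  finally show ?thesis by simp
qed

lemma sum_haar_sign:
  "0 < P \<Longrightarrow> (\<Sum>i<2*P. haar_sign (int (i div P))) = 0"
  using sum_haar_sign_block[of P 0] by simp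

lemma sum_haar_sign_sq:
  assumes "0 < P" shows "(\<Sum>i<2*P. (haar_sign (int (i div P)))^2) = 2 * real P"
proof -
  have "(\<Sum>i<2*P. (haar_sign (int (i div P)))^2) = (\<Sum>i<2*P. 1)"
    using haar_sign_half_block[OF assms] by (intro sum.cong refl) (fastforce simp: haar_sign_def)
  then show ?thesis by simp
qed

text \<open>The value of \<open>haar l\<close> on the grid cell \<open>]m/2^(jn+1), (m+1)/2^(jn+1)[\<close> for levels
  \<open>-1 \<le> j \<le> jn\<close>; on this grid the \<open>L\<^sup>2\<close> bound reduces to finite sums.\<close>
definition haar_grid :: "nat \<Rightarrow> int \<times> int \<Rightarrow> int \<Rightarrow> real" where
  "haar_grid jn l m = (case l of (j, k) \<Rightarrow>
     if j = -1 then (if m div 2^(Suc jn) = k then 1 else 0)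
     else 2 powr (real_of_int j / 2) * haar_sign (m div 2^(nat (int jn - j)) - 2*k))"

lemma haar_scaling_eq_haar_grid:
  fixes x :: real
  assumes c: "m < x * 2^(Suc jn)" "x * 2^(Suc jn) < m + 1"
  shows "haar (-1, k) x = haar_grid jn (-1, k) m"
proof -
  define X where "X = x * 2^(Suc jn)"
  have X: "m < X" "X < m+1" using c by (auto simp: X_def)
  have "(x - k \<in> {0..1}) \<longleftrightarrow> (k * 2^(Suc jn) \<le> X \<and> X \<le> (k+1) * 2^(Suc jn))"
  proof -
    have p: "(0::real) < 2^(Suc jn)" by simp
    have "(x - k \<in> {0..1}) \<longleftrightarrow>
        (0 * 2^(Suc jn) \<le> (x - k) * 2^(Suc jn) \<and> (x - k) * 2^(Suc jn) \<le> 1 * 2^(Suc jn))"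
      using mult_le_cancel_right_pos[OF p] by (simp only: atLeastAtMost_iff)
    then show ?thesis by (simp add: X_def algebra_simps)
  qed
  also have "\<dots> \<longleftrightarrow> (k * 2^(Suc jn) \<le> m \<and> m + 1 \<le> (k+1) * 2^(Suc jn))"
    using between_ints_iff(1)[OF X, of "k * 2^(Suc jn)" "(k+1) * 2^(Suc jn)"] by simp
  also have "\<dots> \<longleftrightarrow> m div 2^(Suc jn) = k"
    by (subst int_div_eq_iff) (auto simp: algebra_simps)
  finally show ?thesis by (simp add: haar_def haar_phi_def haar_grid_def indicator_def)
qed

lemma haar_detail_eq_haar_grid:
  fixes x :: real
  assumes jj: "jj \<le> jn" and c: "m < x * 2^(Suc jn)" "x * 2^(Suc jn) < m + 1"
  shows "haar (int jj, k) x = haar_grid jn (int jj, k) m"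
proof -
  define q :: int where "q = 2^(jn - jj)"
  have q: "q > 0" by (simp add: q_def)
  have qj: "real_of_int q * 2^jj = 2^jn"
    using jj by (simp add: q_def power_add[symmetric])
  define X where "X = x * 2^(Suc jn)"
  have X: "m < X" "X < m+1" using c by (auto simp: X_def)
  define y where "y = 2 powr (real jj) * x - k"
  have y: "y = (X - 2*q*k) / (2*q)"
    using q qj by (simp add: y_def X_def powr_realpow field_simps)
  have A: "(0 \<le> y \<and> y \<le> 1/2) \<longleftrightarrow> (2*q*k \<le> X \<and> X \<le> 2*q*k + q)"
    using q by (simp add: y field_simps; simp add: algebra_simps; linarith)
  have B: "(1/2 < y \<and> y \<le> 1) \<longleftrightarrow> (2*q*k + q < X \<and> X \<le> 2*q*k + 2*q)"
    using q by (simp add: y field_simps; simp add: algebra_simps; linarith)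
  have "(0 \<le> y \<and> y \<le> 1/2) \<longleftrightarrow> m div q = 2*k"
    unfolding A using between_ints_iff(1)[OF X, of "2*q*k" "2*q*k + q"] int_div_eq_iff[OF q, of m "2*k"]
    by (auto simp: algebra_simps)
  moreover have "(1/2 < y \<and> y \<le> 1) \<longleftrightarrow> m div q = 2*k + 1"
    unfolding B using between_ints_iff(2)[OF X, of "2*q*k + q" "2*q*k + 2*q"]
      int_div_eq_iff[OF q, of m "2*k+1"]
    by (auto simp: algebra_simps)
  ultimately have "haar_psi y = haar_sign (m div q - 2*k)"
    by (auto simp: haar_psi_def haar_sign_def indicator_def)
  then show ?thesis using jj by (simp add: haar_def haar_grid_def y_def q_def nat_diff_distrib)
qed

lemma haar_eq_haar_grid:
  fixes x :: real
  assumes j: "-1 \<le> j" "j \<le> int jn"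
    and c: "m < x * 2^(Suc jn)" "x * 2^(Suc jn) < m + 1"
  shows "haar (j, k) x = haar_grid jn (j, k) m"
proof (cases "j = -1")
  case True
  then show ?thesis using haar_scaling_eq_haar_grid[OF c] by simp
next
  case False
  then have "0 \<le> j" using j by simp
  then obtain jj where "j = int jj" by (metis nonneg_eq_int)
  then show ?thesis using haar_detail_eq_haar_grid[OF _ c] j by simp
qed

lemma haar_grid_coarser_const:
  fixes k k' j' :: int and j jn :: nat
  assumes "j \<le> jn" "-1 \<le> j'" "j' < int j"
  defines "P \<equiv> (2::nat)^(jn - j)"
  assumes "i < 2*P"
  shows "haar_grid jn (j', k') (2*int P*k + int i) = haar_grid jn (j', k') (2*int P*k)"
proof -
  have P0: "0 < P" by (simp add: P_def)
  show ?thesis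
  proof (cases "j' = -1")
    case True
    have ex: "Suc jn = Suc ((jn - j) + j)" using assms by simp
    have e: "(2::int)^(Suc jn) = 2 * int P * int (2^j)"
      unfolding P_def of_nat_power ex by (simp only: power_Suc power_add of_nat_numeral mult.assoc)
    show ?thesis unfolding haar_grid_def e
      using True div_mult_block[OF assms(5) P0, of k "2^j"] div_mult_block[of 0 P k "2^j"] P0 by simp
  next
    case False
    then have "0 \<le> j'" using assms by simp
    then obtain jj' where jj': "j' = int jj'" by (metis nonneg_eq_int)
    have ex: "nat (int jn - j') = Suc ((jn - j) + (j - jj' - 1))" using assms jj' by simp
    have e: "(2::int)^(nat (int jn - j')) = 2 * int P * int (2^(j - jj' - 1))"
      unfolding P_def of_nat_power ex by (simp only: power_Suc power_add of_nat_numeral mult.assoc)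
    show ?thesis unfolding haar_grid_def
      using False e div_mult_block[OF assms(5) P0, of k "2^(j - jj' - 1)"]
        div_mult_block[of 0 P k "2^(j - jj' - 1)"] P0 by simp
  qed
qed

lemma haar_grid_same_level:
  fixes k k' :: int and j jn :: nat
  assumes "j \<le> jn"
  defines "P \<equiv> (2::nat)^(jn - j)"
  shows "haar_grid jn (int j, k') (2*int P*k + int i)
    = 2 powr (real j / 2) * haar_sign (2*(k - k') + int (i div P))"
proof -
  have P0: "0 < P" by (simp add: P_def)
  have "(int i + (2*k) * int P) div int P = 2*k + int i div int P"
    using P0 by (intro div_mult_self1) simp
  then have "(2*int P*k + int i) div int P = 2*k + int (i div P)"
    by (simp add: algebra_simps zdiv_int)
  then show ?thesis using assms by (simp add: haar_grid_def P_def nat_diff_distrib algebra_simps)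
qed

lemma haar_grid_finer_orthogonal:
  fixes k k' :: int and j jn jj :: nat
  assumes "j < jj" "jj \<le> jn"
  defines "P \<equiv> (2::nat)^(jn - j)"
  shows "(\<Sum>i<2*P. haar_sign (int (i div P)) * haar_grid jn (int jj, k') (2*int P*k + int i)) = 0"
proof -
  define q :: nat where "q = 2^(jn - jj)"
  define r :: nat where "r = 2^(jj - j - 1)"
  have q0: "0 < q" by (simp add: q_def)
  have ex: "jn - j = (jj - j - 1) + Suc (jn - jj)" using assms by simp
  have Pqr: "P = r * 2 * q" unfolding P_def q_def r_def ex power_add power_Suc
    by (simp only: mult.assoc)
  have H: "haar_grid jn (int jj, k') m = 2 powr (real jj / 2) * haar_sign (m div int q - 2*k')" for m
    using assms by (simp add: haar_grid_def q_def nat_diff_distrib)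
  have d1: "(b*(2*q) + l) div P = b div r" if "l < 2*q" for b l
  proof -
    have "P = (2*q)*r" using Pqr by simp
    then have "(b*(2*q) + l) div P = ((b*(2*q) + l) div (2*q)) div r"
      by (simp only: div_mult2_eq)
    then show ?thesis using that by simp
  qed
  have d2: "(2*int P*k + int (b*(2*q) + l)) div int q = 2*(2*int r*k + int b) + int (l div q)" for b l
  proof -
    have h1: "2*int P*k + int (b*(2*q) + l) = int l + (4*int r*k + 2*int b) * int q"
      using Pqr by (simp add: algebra_simps)
    have h2: "(int l + (4*int r*k + 2*int b) * int q) div int q = (4*int r*k + 2*int b) + int l div int q"
      using q0 by (intro div_mult_self1) simp
    have "(2*int P*k + int (b*(2*q) + l)) div int q = int l div int q + (4*int r*k + 2*int b)"
      unfolding h1 h2 by simp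
    then show ?thesis by (simp add: zdiv_int algebra_simps)
  qed
  have "2*P = (2*r)*(2*q)" using Pqr by simp
  then have "(\<Sum>i<2*P. haar_sign (int (i div P)) * haar_grid jn (int jj, k') (2*int P*k + int i))
      = (\<Sum>b<2*r. \<Sum>l<2*q. haar_sign (int ((b*(2*q) + l) div P))
           * haar_grid jn (int jj, k') (2*int P*k + int (b*(2*q) + l)))"
    by (simp only: sum_lessThan_mult_blocks)
  also have "\<dots> = (\<Sum>b<2*r. haar_sign (int (b div r)) * 2 powr (real jj / 2) *
                  (\<Sum>l<2*q. haar_sign (2*(2*int r*k + int b - k') + int (l div q))))"
    unfolding sum_distrib_left
  proof (intro sum.cong refl)
    fix b l assume "l \<in> {..<2*q}"
    then show "haar_sign (int ((b*(2*q) + l) div P)) * haar_grid jn (int jj, k') (2*int P*k + int (b*(2*q) + l))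
      = haar_sign (int (b div r)) * 2 powr (real jj / 2) * haar_sign (2*(2*int r*k + int b - k') + int (l div q))"
      unfolding H d1[OF \<open>l \<in> _\<close>[simplified]] d2 by (simp add: algebra_simps)
  qed
  also have "\<dots> = 0" by (simp only: sum_haar_sign_block[OF q0] mult_zero_right sum.neutral_const)
  finally show ?thesis .
qed

lemma haar_grid_orthogonal:
  fixes k k' j' :: int and j jn :: nat
  assumes "j \<le> jn" "-1 \<le> j'" "j' \<le> int jn"
  defines "P \<equiv> (2::nat)^(jn - j)"
  shows "(\<Sum>i<2*P. haar_sign (int (i div P)) * haar_grid jn (j', k') (2*int P*k + int i))
         = (if (j', k') = (int j, k) then 2 * real P * 2 powr (real j / 2) else 0)"
proof -
  have P0: "0 < P" by (simp add: P_def)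
  consider (coarser) "j' < int j" | (same) "j' = int j" | (finer) jj where "j' = int jj" "j < jj"
  proof (cases "j' < int j")
    case False
    then have "0 \<le> j'" by simp
    then obtain jj where "j' = int jj" by (metis nonneg_eq_int)
    then show ?thesis using False that(2,3) by (cases "jj = j") auto
  qed
  then show ?thesis
  proof cases
    case coarser
    have "(\<Sum>i<2*P. haar_sign (int (i div P)) * haar_grid jn (j', k') (2*int P*k + int i))
        = (\<Sum>i<2*P. haar_sign (int (i div P))) * haar_grid jn (j', k') (2*int P*k)"
      unfolding sum_distrib_right
      using haar_grid_coarser_const[OF assms(1,2) coarser] by (simp add: P_def)
    then show ?thesis using coarser sum_haar_sign[OF P0] by simp
  next
    case same
    have "(\<Sum>i<2*P. haar_sign (int (i div P)) * haar_grid jn (j', k') (2*int P*k + int i))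
        = (\<Sum>i<2*P. if k' = k then 2 powr (real j / 2) else 0)"
      using haar_sign_half_block[OF P0] unfolding same haar_grid_same_level[OF assms(1), folded P_def]
      by (intro sum.cong refl) (fastforce simp: haar_sign_def)
    then show ?thesis using same by simp
  next
    case finer
    then show ?thesis using haar_grid_finer_orthogonal[of j jj jn] assms by (simp add: P_def)
  qed
qed

lemma haar_grid_support:
  fixes m :: int
  assumes m: "0 \<le> m" "m < 2^(Suc jn)" and j: "-1 \<le> j" "j \<le> int jn"
    and nz: "haar_grid jn (j, k) m \<noteq> 0"
  shows "0 \<le> k \<and> k < 2^jn"
proof (cases "j = -1")
  case True
  then have "m div 2^(Suc jn) = k" using nz by (auto simp: haar_grid_def split: if_splits)
  moreover have "m div 2^(Suc jn) = 0" using m by (simp add: div_pos_pos_trivial)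
  ultimately show ?thesis by auto
next
  case False
  then have "0 \<le> j" using j by simp
  then obtain jj where jj: "j = int jj" by (metis nonneg_eq_int)
  have jjn: "jj \<le> jn" using j jj by simp
  define q :: int where "q = 2^(jn - jj)"
  have q0: "q > 0" by (simp add: q_def)
  have "haar_sign (m div q - 2*k) \<noteq> 0"
    using nz False jj jjn by (simp add: haar_grid_def q_def nat_diff_distrib)
  then have c: "m div q = 2*k \<or> m div q = 2*k + 1" by (auto simp: haar_sign_def split: if_splits)
  have "Suc jn = Suc jj + (jn - jj)" using jjn by simp
  then have "m < 2^(Suc jj) * q" using m unfolding q_def by (simp only: power_add)
  then have "m div q < 2^(Suc jj)"
    using q0 by (smt (verit) minus_div_mult_eq_mod mult_right_less_imp_less pos_mod_sign)
  moreover have "0 \<le> m div q" using m q0 by (simp add: pos_imp_zdiv_nonneg_iff)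
  ultimately have "0 \<le> k" "k < 2^jj" using c by auto
  moreover have "(2::int)^jj \<le> 2^jn" using jjn by (simp add: power_increasing)
  ultimately show ?thesis by linarith
qed

definition haar_levels :: "nat \<Rightarrow> (int \<times> int) set" where
  "haar_levels jn = {(j, k). -1 \<le> j \<and> j \<le> int jn}"

definition haar_levels_unit :: "nat \<Rightarrow> (int \<times> int) set" where
  "haar_levels_unit jn = {-1..int jn} \<times> {0..<2^jn}"

lemma finite_haar_levels_unit [simp]: "finite (haar_levels_unit jn)"
  by (simp add: haar_levels_unit_def)

lemma infsum_haar_on_grid_cell:
  fixes w :: "int \<times> int \<Rightarrow> real" and m :: int and x :: real
  assumes "0 \<le> m" "m < 2^(Suc jn)" "m < x * 2^(Suc jn)" "x * 2^(Suc jn) < real_of_int m + 1"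
  shows "(\<Sum>\<^sub>\<infinity>l\<in>haar_levels jn. w l * haar l x) = (\<Sum>l\<in>haar_levels_unit jn. w l * haar_grid jn l m)"
proof -
  have "(\<Sum>\<^sub>\<infinity>l\<in>haar_levels jn. w l * haar l x) = (\<Sum>\<^sub>\<infinity>l\<in>haar_levels jn. w l * haar_grid jn l m)"
    using haar_eq_haar_grid[OF _ _ assms(3,4)] by (intro infsum_cong) (auto simp: haar_levels_def)
  also have "\<dots> = (\<Sum>\<^sub>\<infinity>l\<in>haar_levels_unit jn. w l * haar_grid jn l m)"
    using haar_grid_support[OF assms(1,2)]
    by (intro infsum_cong_neutral) (fastforce simp: haar_levels_def haar_levels_unit_def)+
  finally show ?thesis by simp
qed

lemma powr_half_sq: "(2 powr (real j / 2))^2 = (2::real)^j"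
  by (simp add: powr_realpow[symmetric] powr_powr[symmetric] power2_eq_square powr_add[symmetric])

text \<open>Cauchy--Schwarz against the Haar sign pattern of the block: by orthogonality the pairing
  picks out \<open>w (j,k)\<close>, and the constant \<open>1\<close> contributes nothing.\<close>
lemma haar_coeff_sq_le_block_sum:
  fixes w :: "int \<times> int \<Rightarrow> real" and j jn k :: nat
  assumes jk: "j \<le> jn" "k < 2^j"
  defines "P \<equiv> (2::nat)^(jn - j)"
  defines "F \<equiv> (\<lambda>m. \<Sum>l\<in>haar_levels_unit jn. w l * haar_grid jn l m)"
  shows "2 * real P * 2^j * (w (int j, int k))^2 \<le> (\<Sum>i<2*P. (F (2*int P*int k + int i) - 1)^2)"
proof -
  have P0: "0 < P" by (simp add: P_def)
  define c where "c = 2 * real P * 2 powr (real j / 2)"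
  define S where "S = (\<Sum>i<2*P. haar_sign (int (i div P)) * (F (2*int P*int k + int i) - 1))"
  have mem: "(int j, int k) \<in> haar_levels_unit jn"
  proof -
    have "(2::nat)^j \<le> 2^jn" using jk by (simp add: power_increasing)
    then have "k < 2^jn" using jk by linarith
    then show ?thesis using jk by (auto simp: haar_levels_unit_def)
  qed
  have "S = (\<Sum>i<2*P. haar_sign (int (i div P)) * F (2*int P*int k + int i))"
    unfolding S_def using sum_haar_sign[OF P0] by (simp add: algebra_simps sum_subtractf)
  also have "\<dots> = (\<Sum>l\<in>haar_levels_unit jn.
      w l * (\<Sum>i<2*P. haar_sign (int (i div P)) * haar_grid jn l (2*int P*int k + int i)))"
    unfolding F_def sum_distrib_left by (subst sum.swap) (simp add: algebra_simps)
  also have "\<dots> = (\<Sum>l\<in>haar_levels_unit jn. w l * (if l = (int j, int k) then c else 0))"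
  proof (intro sum.cong refl)
    fix l assume "l \<in> haar_levels_unit jn"
    then obtain j' k' where l: "l = (j', k')" "-1 \<le> j'" "j' \<le> int jn"
      by (auto simp: haar_levels_unit_def)
    show "w l * (\<Sum>i<2*P. haar_sign (int (i div P)) * haar_grid jn l (2*int P*int k + int i))
      = w l * (if l = (int j, int k) then c else 0)"
      using haar_grid_orthogonal[OF jk(1) l(2,3), of k' "int k"] l(1) unfolding P_def c_def by simp
  qed
  also have "\<dots> = w (int j, int k) * c"
    using mem by (simp add: if_distrib[of "\<lambda>x. w _ * x"] sum.delta cong: if_cong)
  finally have "S^2 = (w (int j, int k))^2 * (2 * real P)^2 * (2 powr (real j / 2))^2"
    by (simp add: c_def power_mult_distrib)
  then have "S^2 = 2 * real P * (2 * real P * 2^j * (w (int j, int k))^2)"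
    unfolding powr_half_sq by (simp add: power2_eq_square)
  moreover have "S^2 \<le> (\<Sum>i<2*P. (haar_sign (int (i div P)))^2)
      * (\<Sum>i<2*P. (F (2*int P*int k + int i) - 1)^2)"
    unfolding S_def by (rule Cauchy_Schwarz_ineq_sum)
  ultimately show ?thesis using P0 by (simp add: sum_haar_sign_sq mult_le_cancel_left_pos)
qed

lemma nn_integral_ge_grid_sum:
  fixes f :: "real \<Rightarrow> real" and c :: "nat \<Rightarrow> real" and N :: nat
  assumes N: "0 < N" and c: "\<And>m. 0 \<le> c m"
    and f: "\<And>m x. m < N \<Longrightarrow> real m < x * real N \<Longrightarrow> x * real N < real m + 1 \<Longrightarrow> f x = c m"
  shows "ennreal (\<Sum>m<N. c m / N) \<le> (\<integral>\<^sup>+x. ennreal (f x) \<partial>lborel)"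
proof -
  define cell where "cell = (\<lambda>m::nat. {real m / real N <..< (real m + 1) / real N})"
  have cellE: "real m < x * real N \<and> x * real N < real m + 1" if "x \<in> cell m" for x m
    using that N by (auto simp: cell_def field_simps)
  have cell_unique: "m = m'" if "x \<in> cell m" "x \<in> cell m'" for x m m'
  proof -
    have "\<lfloor>x * real N\<rfloor> = int m" "\<lfloor>x * real N\<rfloor> = int m'"
      using cellE[OF that(1)] cellE[OF that(2)] by (auto intro!: floor_unique)
    then show ?thesis by simp
  qed
  have step_le: "(\<Sum>m<N. ennreal (c m) * indicator (cell m) x) \<le> ennreal (f x)" for x
  proof (cases "\<exists>m<N. x \<in> cell m")
    case True
    then obtain m0 where m0: "m0 < N" "x \<in> cell m0" by auto
    have "(\<Sum>m<N. ennreal (c m) * indicator (cell m) x) = (\<Sum>m<N. if m = m0 then ennreal (c m) else 0)"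
      using m0 cell_unique by (intro sum.cong refl) (auto simp: indicator_def)
    also have "\<dots> = ennreal (f x)" using m0 f cellE by (simp add: sum.delta)
    finally show ?thesis by simp
  next
    case False
    then show ?thesis by (simp add: indicator_def)
  qed
  have "ennreal (\<Sum>m<N. c m / N) = (\<Sum>m<N. ennreal (c m / N))"
    using c N by (intro sum_ennreal[symmetric]) simp
  also have "\<dots> = (\<Sum>m<N. \<integral>\<^sup>+x. ennreal (c m) * indicator (cell m) x \<partial>lborel)"
  proof (intro sum.cong refl)
    fix m
    have "emeasure lborel (cell m) = ennreal (1 / real N)"
      unfolding cell_def using N by (simp add: field_simps diff_divide_distrib[symmetric])
    then show "ennreal (c m / N) = (\<integral>\<^sup>+x. ennreal (c m) * indicator (cell m) x \<partial>lborel)"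
      using c by (subst nn_integral_cmult_indicator) (auto simp: cell_def ennreal_mult[symmetric])
  qed
  also have "\<dots> = (\<integral>\<^sup>+x. (\<Sum>m<N. ennreal (c m) * indicator (cell m) x) \<partial>lborel)"
    by (rule nn_integral_sum[symmetric]) (auto simp: cell_def)
  also have "\<dots> \<le> (\<integral>\<^sup>+x. ennreal (f x) \<partial>lborel)"
    by (rule nn_integral_mono) (rule step_le)
  finally show ?thesis .
qed

text \<open>Bessel's inequality, using that \<open>1_{[0,1]}\<close> is orthogonal to every \<open>\<psi>_{j,k}\<close>.\<close>
lemma sum_haar_coeffs_sq_le_L2_dist:
  fixes w :: "int \<times> int \<Rightarrow> real" and j jn :: nat
  assumes jj: "j \<le> jn"
  shows "ennreal (\<Sum>k<2^j. (w (int j, int k))^2)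
     \<le> (\<integral>\<^sup>+x. ennreal (((\<Sum>\<^sub>\<infinity>l\<in>haar_levels jn. w l * haar l x) - indicator {0..1} x)^2) \<partial>lborel)"
proof -
  define N :: nat where "N = 2^(Suc jn)"
  define P :: nat where "P = 2^(jn - j)"
  define F where "F = (\<lambda>m. \<Sum>l\<in>haar_levels_unit jn. w l * haar_grid jn l m)"
  have N0: "0 < N" by (simp add: N_def)
  have NP: "N = 2^j * (2*P)"
  proof -
    have "Suc jn = j + Suc (jn - j)" using jj by simp
    then show ?thesis unfolding N_def P_def by (simp only: power_add power_Suc)
  qed
  have "real N * (\<Sum>k<2^j. (w (int j, int k))^2) = (\<Sum>k<2^j. 2 * real P * 2^j * (w (int j, int k))^2)"
    unfolding NP by (simp add: sum_distrib_left algebra_simps)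
  also have "\<dots> \<le> (\<Sum>k<2^j. \<Sum>i<2*P. (F (int (k*(2*P) + i)) - 1)^2)"
    using haar_coeff_sq_le_block_sum[OF jj, of _ w] unfolding F_def P_def
    by (intro sum_mono) (simp add: algebra_simps)
  also have "\<dots> = (\<Sum>m<N. (F (int m) - 1)^2)"
    unfolding NP by (rule sum_lessThan_mult_blocks[symmetric])
  finally have "(\<Sum>k<2^j. (w (int j, int k))^2) \<le> (\<Sum>m<N. (F (int m) - 1)^2 / N)"
    using N0 by (simp add: sum_divide_distrib[symmetric] field_simps)
  then have "ennreal (\<Sum>k<2^j. (w (int j, int k))^2) \<le> ennreal (\<Sum>m<N. (F (int m) - 1)^2 / N)"
    by (rule ennreal_leI)
  also have "\<dots> \<le> (\<integral>\<^sup>+x. ennreal (((\<Sum>\<^sub>\<infinity>l\<in>haar_levels jn. w l * haar l x) - indicator {0..1} x)^2) \<partial>lborel)"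
  proof (rule nn_integral_ge_grid_sum[OF N0])
    fix m x assume m: "m < N" "real m < x * real N" "x * real N < real m + 1"
    have "0 < x * real N" using m by linarith
    then have "0 < x" using N0 by (simp add: zero_less_mult_iff)
    moreover have "real m + 1 \<le> real N" using m(1) by linarith
    then have "x * real N < 1 * real N" using m by linarith
    then have "x < 1" using N0 by simp
    ultimately have "indicator {0..1} x = (1::real)" by simp
    moreover have "int m < 2^(Suc jn)" using m(1) unfolding N_def by (metis of_nat_less_iff of_nat_numeral of_nat_power)
    ultimately show "((\<Sum>\<^sub>\<infinity>l\<in>haar_levels jn. w l * haar l x) - indicator {0..1} x)^2 = (F (int m) - 1)^2"
      unfolding F_def using m by (subst infsum_haar_on_grid_cell) (auto simp: N_def)
  qed simp
  finally show ?thesis .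
qed

section \<open>The estimator on a single level\<close>

lemma j0_bounds:
  fixes n :: real assumes "1 \<le> n"
  shows "0 \<le> j0 n" "2 ^ nat (j0 n) \<le> n" "n < 2 ^ Suc (nat (j0 n))"
proof -
  define jj where "jj = \<lfloor>log 2 n\<rfloor>"
  have n0: "0 < n" using assms by simp
  have P: "2 powr (real_of_int jj) \<le> n \<and> n < 2 powr (real_of_int jj + 1)"
  proof
    have "2 powr (real_of_int jj) \<le> 2 powr (log 2 n)" unfolding jj_def by (intro powr_mono) auto
    then show "2 powr (real_of_int jj) \<le> n" using n0 by simp
    have "log 2 n < real_of_int jj + 1" unfolding jj_def by linarith
    then have "2 powr (log 2 n) < 2 powr (real_of_int jj + 1)" by (intro powr_less_mono) auto
    then show "n < 2 powr (real_of_int jj + 1)" using n0 by simp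
  qed
  have "j = jj" if "2 powr (real_of_int j) \<le> n \<and> n < 2 powr (real_of_int j + 1)" for j
  proof -
    have "real_of_int j \<le> log 2 n" "log 2 n < real_of_int j + 1"
      using that n0 by (simp_all add: le_log_iff log_less_iff)
    then show ?thesis unfolding jj_def by (intro floor_unique[symmetric]) auto
  qed
  then have j0: "j0 n = jj" unfolding j0_def using P by (intro the_equality) blast+
  show "0 \<le> j0 n" using assms by (simp add: j0 jj_def)
  then show "2 ^ nat (j0 n) \<le> n" "n < 2 ^ Suc (nat (j0 n))"
    using P by (simp_all add: j0 powr_realpow[symmetric] powr_add)
qed

lemma Gamma_n_eq_haar_levels:
  "1 \<le> n \<Longrightarrow> Gamma_n n = haar_levels (nat (j0 n))"
  using j0_bounds(1) by (auto simp: Gamma_n_def haar_levels_def Lambda_def)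

definition left_half :: "nat \<Rightarrow> int \<Rightarrow> real set" where
  "left_half j k = {real_of_int k / 2^j .. (real_of_int k + 1/2) / 2^j}"

definition right_half :: "nat \<Rightarrow> int \<Rightarrow> real set" where
  "right_half j k = {(real_of_int k + 1/2) / 2^j <.. (real_of_int k + 1) / 2^j}"

lemma haar_eq_halves:
  "haar (int j, k) x = 2 powr (real j / 2) * (indicator (left_half j k) x - indicator (right_half j k) x)"
  by (simp add: haar_def haar_psi_def left_half_def right_half_def indicator_def powr_realpow field_simps)

lemma halves_disjoint: "left_half j k \<inter> right_half j k = {}"
  by (auto simp: left_half_def right_half_def)

lemma haar_sq_eq_halves:
  "(haar (int j, k) x)^2 = 2^j * (indicator (left_half j k) x + indicator (right_half j k) x)"
  using halves_disjoint[of j k] unfolding haar_eq_halves power_mult_distrib powr_half_sq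
  by (auto simp: indicator_def)

lemma beta_hat_eq_half_counts:
  "beta_hat n N (int j, k)
    = 2 powr (real j / 2) * (real (count_in (left_half j k) N) - real (count_in (right_half j k) N)) / n"
proof -
  have "(\<Sum>T\<in>#N. haar (int j, k) T)
    = 2 powr (real j / 2) * (real (count_in (left_half j k) N) - real (count_in (right_half j k) N))"
    by (induction N) (auto simp: count_in_def haar_eq_halves indicator_def algebra_simps)
  then show ?thesis by (simp add: beta_hat_def)
qed

lemma V_hat_eq_half_counts:
  "V_hat n N (int j, k)
    = 2^j * (real (count_in (left_half j k) N) + real (count_in (right_half j k) N)) / n^2"
proof -
  have "(\<Sum>T\<in>#N. (haar (int j, k) T)^2)
    = 2^j * (real (count_in (left_half j k) N) + real (count_in (right_half j k) N))"
    by (induction N) (auto simp: count_in_def haar_sq_eq_halves indicator_def algebra_simps)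
  then show ?thesis by (simp add: V_hat_def)
qed

lemma sup_norm_haar:
  "0 \<le> sup_norm (haar (int j, k))" "sup_norm (haar (int j, k)) \<le> 2 powr (real j / 2)"
proof -
  have b: "\<bar>haar (int j, k) x\<bar> \<le> 2 powr (real j / 2)" for x
    unfolding haar_eq_halves by (auto simp: indicator_def abs_mult)
  then show "sup_norm (haar (int j, k)) \<le> 2 powr (real j / 2)"
    unfolding sup_norm_def by (intro cSUP_least) auto
  have "\<bar>haar (int j, k) 0\<bar> \<le> sup_norm (haar (int j, k))"
    unfolding sup_norm_def using b by (intro cSUP_upper bdd_aboveI2) auto
  then show "0 \<le> sup_norm (haar (int j, k))" by linarith
qed

lemma eta_le_half_counts:
  fixes n gamma :: real and N :: "real multiset" and j :: nat and k :: int
  assumes n1: "1 \<le> n" and g: "0 < gamma"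
  defines "cnt \<equiv> real (count_in (left_half j k) N) + real (count_in (right_half j k) N)"
  defines "L \<equiv> ln n"
  shows "eta gamma n N (int j, k)
    \<le> 2 powr (real j / 2) / n * (sqrt (2*gamma*L*(cnt + sqrt (2*gamma*L*cnt) + 3*gamma*L)) + gamma*L/3)"
proof -
  define a where "a = 2 powr (real j / 2)"
  define S where "S = sup_norm (haar (int j, k))"
  define X where "X = cnt + sqrt (2*gamma*L*cnt) + 3*gamma*L"
  have a0: "0 < a" by (simp add: a_def)
  have S: "0 \<le> S" "S \<le> a" using sup_norm_haar unfolding S_def a_def by auto
  have L0: "0 \<le> L" using n1 by (simp add: L_def)
  have cnt0: "0 \<le> cnt" by (simp add: cnt_def)
  have n0: "0 < n" using n1 by simp
  have Vh: "V_hat n N (int j, k) = a^2 * cnt / n^2"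
    unfolding V_hat_eq_half_counts cnt_def a_def powr_half_sq by simp
  have "2 * gamma * L * V_hat n N (int j, k) * S^2 / n^2 \<le> 2 * gamma * L * (a^2 * cnt / n^2) * a^2 / n^2"
    unfolding Vh using S g L0 cnt0 by (intro divide_right_mono mult_left_mono power_mono) auto
  also have "\<dots> = (a^2/n^2)^2 * (2*gamma*L*cnt)" by (simp add: power2_eq_square field_simps)
  finally have "sqrt (2 * gamma * L * V_hat n N (int j, k) * S^2 / n^2)
      \<le> sqrt ((a^2/n^2)^2 * (2*gamma*L*cnt))"
    by (rule real_sqrt_le_mono)
  also have "\<dots> = a^2/n^2 * sqrt (2*gamma*L*cnt)" by (simp add: real_sqrt_mult)
  finally have "sqrt (2 * gamma * L * V_hat n N (int j, k) * S^2 / n^2) \<le> a^2/n^2 * sqrt (2*gamma*L*cnt)" .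
  moreover have "3 * gamma * L * S^2 / n^2 \<le> 3 * gamma * L * a^2 / n^2"
    using S g L0 by (intro divide_right_mono mult_left_mono power_mono) auto
  ultimately have "V_tilde gamma n N (int j, k) \<le> a^2/n^2 * X"
    unfolding V_tilde_def X_def S_def[symmetric] L_def[symmetric] Vh by (simp add: algebra_simps; linarith)
  then have "2 * gamma * V_tilde gamma n N (int j, k) * L \<le> 2 * gamma * (a^2/n^2 * X) * L"
    using g L0 by (intro mult_right_mono mult_left_mono) auto
  also have "\<dots> = (a/n)^2 * (2*gamma*L*X)" by (simp add: power_divide)
  finally have "sqrt (2 * gamma * V_tilde gamma n N (int j, k) * L) \<le> sqrt ((a/n)^2 * (2*gamma*L*X))"
    by (rule real_sqrt_le_mono)
  also have "\<dots> = a/n * sqrt (2*gamma*L*X)" using a0 n0 by (simp add: real_sqrt_mult)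
  finally have "sqrt (2 * gamma * V_tilde gamma n N (int j, k) * L) \<le> a/n * sqrt (2*gamma*L*X)" .
  moreover have "gamma * L / (3 * n) * S \<le> a/n * (gamma*L/3)"
    using S g L0 n0 by (simp add: mult_left_mono field_simps)
  ultimately show ?thesis unfolding eta_def S_def[symmetric] L_def[symmetric] a_def[symmetric] X_def
    by (simp add: algebra_simps)
qed

lemma coefficient_kept:
  fixes n gamma :: real and N :: "real multiset" and j :: nat and k :: int
  assumes n1: "1 \<le> n" and g: "0 < gamma"
  defines "cL \<equiv> real (count_in (left_half j k) N)" and "cR \<equiv> real (count_in (right_half j k) N)"
  defines "L \<equiv> ln n"
  assumes D: "sqrt (2*gamma*L*((cL + cR) + sqrt (2*gamma*L*(cL + cR)) + 3*gamma*L)) + gamma*L/3 \<le> cL - cR"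
  shows "eta gamma n N (int j, k) \<le> \<bar>beta_hat n N (int j, k)\<bar>"
proof -
  have "0 \<le> sqrt (2*gamma*L*((cL + cR) + sqrt (2*gamma*L*(cL + cR)) + 3*gamma*L))"
    using g n1 by (simp add: L_def cL_def cR_def)
  moreover have "0 \<le> gamma*L/3" using g n1 by (simp add: L_def)
  ultimately have "0 \<le> cL - cR" using D by linarith
  have "eta gamma n N (int j, k)
      \<le> 2 powr (real j / 2) / n * (sqrt (2*gamma*L*((cL + cR) + sqrt (2*gamma*L*(cL + cR)) + 3*gamma*L)) + gamma*L/3)"
    using eta_le_half_counts[OF n1 g, of N j k] unfolding cL_def cR_def L_def .
  also have "\<dots> \<le> 2 powr (real j / 2) / n * (cL - cR)"
    using D n1 by (intro mult_left_mono) auto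
  finally show ?thesis
    using \<open>0 \<le> cL - cR\<close> n1 by (simp add: beta_hat_eq_half_counts cL_def cR_def abs_mult)
qed

section \<open>Poisson counts on half-cells\<close>

lemma halves_subset_unit:
  assumes "k < 2^j"
  shows "left_half j (int k) \<subseteq> {0..1}" "right_half j (int k) \<subseteq> {0..1}"
proof -
  have "real k + 1 \<le> 2^j"
    using assms by (metis Suc_eq_plus1 Suc_leI of_nat_1 of_nat_add of_nat_le_iff of_nat_numeral
        of_nat_power)
  then have "(real k + 1) / 2^j \<le> 1" by simp
  moreover have "(real k + 1/2) / 2^j \<le> (real k + 1) / 2^j" "0 \<le> real k / 2^j"
    by (simp_all add: divide_right_mono)
  moreover have "real k / 2^j \<le> (real k + 1/2) / 2^j" by (simp add: divide_right_mono)
  ultimately show "left_half j (int k) \<subseteq> {0..1}" "right_half j (int k) \<subseteq> {0..1}"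
    unfolding left_half_def right_half_def
    by (intro subsetI; simp only: atLeastAtMost_iff greaterThanAtMost_iff of_int_of_nat_eq; linarith)+
qed

lemma measure_halves:
  "measure lborel (left_half j k) = 1 / 2^(Suc j)" "measure lborel (right_half j k) = 1 / 2^(Suc j)"
  by (simp_all add: left_half_def right_half_def field_simps)

lemma set_integral_indicator_unit:
  fixes A :: "real set" and n :: real
  assumes "A \<in> sets borel" "A \<subseteq> {0..1}"
  shows "set_lebesgue_integral lborel A (\<lambda>x. n * indicator {0..1} x) = n * measure lborel A"
proof -
  have "emeasure lborel A \<le> emeasure lborel {0..1::real}" using assms by (intro emeasure_mono) auto
  then have "emeasure lborel A \<noteq> \<infinity>" by (auto simp: top_unique)
  moreover have "set_lebesgue_integral lborel A (\<lambda>x. n * indicator {0..1} x)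
      = set_lebesgue_integral lborel A (\<lambda>x. n)"
    using assms by (intro set_lebesgue_integral_cong) (auto simp: indicator_def)
  ultimately show ?thesis using assms by (simp add: set_integral_const)
qed

lemma prob_half_counts:
  fixes M :: "'w measure" and a b :: nat
  assumes pp: "poisson_process M N (\<lambda>x. real n * indicator {0..1} x)" and k: "k < 2^j"
  defines "mu \<equiv> real n / 2^(Suc j)"
  defines "E \<equiv> {\<omega> \<in> space M. count_in (left_half j (int k)) (N \<omega>) = a
                             \<and> count_in (right_half j (int k)) (N \<omega>) = b}"
  shows "E \<in> sets M" "measure M E = (mu^a / fact a * exp (- mu)) * (mu^b / fact b * exp (- mu))"
proof -
  interpret prob_space M using pp by (simp add: poisson_process_def)
  define A :: "nat \<Rightarrow> real set" where "A = (\<lambda>i. if i = 0 then left_half j (int k) else right_half j (int k))"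
  define X where "X = (\<lambda>i \<omega>. count_in (A i) (N \<omega>))"
  define B :: "nat \<Rightarrow> nat set" where "B = (\<lambda>i. if i = 0 then {a} else {b})"
  have A: "A i \<in> sets borel" "A i \<subseteq> {0..1}" "measure lborel (A i) = 1 / 2^(Suc j)" for i
    using halves_subset_unit[OF k]
    by (simp_all add: A_def measure_halves) (simp add: left_half_def right_half_def)
  have X: "X i \<in> measurable M (count_space UNIV)" for i
    using pp A by (auto simp: poisson_process_def X_def)
  have dist: "measure M {\<omega> \<in> space M. X i \<omega> = c} = mu^c / fact c * exp (- mu)" for i c
    using pp A set_integral_indicator_unit[OF A(1,2), of i "real n"]
    by (auto simp: poisson_process_def X_def mu_def)
  have "disjoint_family_on A {0,1}"
    using halves_disjoint by (auto simp: disjoint_family_on_def A_def)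
  then have ind: "indep_vars (\<lambda>_. count_space UNIV) X {0,1}"
    using pp A unfolding X_def poisson_process_def by auto
  have E: "E = (\<Inter>i\<in>{0,1}. X i -` B i \<inter> space M)"
    by (auto simp: E_def X_def A_def B_def)
  have sets: "X i -` B i \<inter> space M \<in> sets M" for i using X[of i] by (simp add: measurable_sets)
  then show "E \<in> sets M" unfolding E by auto
  have "measure M E = (\<Prod>i\<in>{0,1}. prob (X i -` B i \<inter> space M))"
    unfolding E by (rule indep_varsD[OF ind]) auto
  also have "\<dots> = prob {\<omega> \<in> space M. X 0 \<omega> = a} * prob {\<omega> \<in> space M. X 1 \<omega> = b}"
    by (simp add: B_def vimage_def Collect_conj_eq Int_commute)
  finally show "measure M E = (mu^a / fact a * exp (- mu)) * (mu^b / fact b * exp (- mu))"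
    using dist[of 0 a] dist[of 1 b] by simp
qed

text \<open>With \<open>u = L/\<mu>\<close> small, a count gap of \<open>2 sqrt(g\<^sub>1 \<mu> L)\<close> around the mean \<open>\<mu>\<close> passes a
  threshold of size \<open>\<mu> sqrt u * threshold_scaled g u\<close> and has Poisson rate at most
  \<open>L * rate_scaled g\<^sub>1 u\<close>; both scaled quantities tend to \<open>2 sqrt g\<close> and \<open>g\<^sub>1\<close> as \<open>u \<rightarrow> 0\<close>.\<close>
definition threshold_scaled :: "real \<Rightarrow> real \<Rightarrow> real" where
  "threshold_scaled g u = sqrt (2*g*(2 + u + sqrt (2*g*u*(2+u)) + 3*g*u)) + g * sqrt u / 3"

definition rate_scaled :: "real \<Rightarrow> real \<Rightarrow> real" where
  "rate_scaled g1 u = (sqrt g1 + sqrt u)^2/2 + (sqrt g1 + sqrt u)^2/(2*(1 - sqrt u * (sqrt g1 + sqrt u)))"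

lemma eventually_scaled_bounds:
  fixes g g1 g2 :: real
  assumes "0 < g" "g < g1" "g1 < g2"
  shows "eventually (\<lambda>u. threshold_scaled g u \<le> 2 * sqrt g1 \<and> sqrt u * (sqrt g1 + sqrt u) \<le> 1/2
    \<and> rate_scaled g1 u \<le> g2) (at_right 0)"
proof -
  have "((\<lambda>u. threshold_scaled g u) \<longlongrightarrow> threshold_scaled g 0) (at_right 0)"
    unfolding threshold_scaled_def by (intro tendsto_intros; simp)
  moreover have "threshold_scaled g 0 = 2 * sqrt g"
    by (simp add: threshold_scaled_def real_sqrt_mult[of 4, simplified])
  ultimately have e1: "eventually (\<lambda>u. threshold_scaled g u < 2 * sqrt g1) (at_right 0)"
    using assms by (auto intro: order_tendstoD(2))
  have "((\<lambda>u. sqrt u * (sqrt g1 + sqrt u)) \<longlongrightarrow> sqrt 0 * (sqrt g1 + sqrt 0)) (at_right 0)"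
    by (intro tendsto_intros)
  from order_tendstoD(2)[OF this, of "1/2"]
  have e2: "eventually (\<lambda>u. sqrt u * (sqrt g1 + sqrt u) < 1/2) (at_right 0)" by simp
  have "((\<lambda>u. rate_scaled g1 u) \<longlongrightarrow> rate_scaled g1 0) (at_right 0)"
    unfolding rate_scaled_def by (intro tendsto_intros; simp)
  moreover have "rate_scaled g1 0 = g1" using assms by (simp add: rate_scaled_def)
  ultimately have e3: "eventually (\<lambda>u. rate_scaled g1 u < g2) (at_right 0)"
    using assms by (auto intro: order_tendstoD(2))
  from e1 e2 e3 show ?thesis by eventually_elim auto
qed

locale gap_counts =
  fixes g1 L mu :: real
  assumes g1: "0 < g1" and L: "1 \<le> L" and mu: "2 \<le> mu"
    and small: "sqrt (L / mu) * (sqrt g1 + sqrt (L / mu)) \<le> 1/2"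
begin

definition deviation :: real where "deviation = sqrt g1 * mu * sqrt (L / mu)"
definition count_high :: nat where "count_high = nat \<lceil>mu + deviation\<rceil>"
definition count_low :: nat where "count_low = nat \<lfloor>mu - deviation\<rfloor>"

lemma gap_counts_bounds:
  defines "u \<equiv> L / mu"
  defines "w \<equiv> sqrt g1 + sqrt u"
  shows "mu + deviation \<le> count_high" "count_high < mu + deviation + 1"
    and "mu - deviation - 1 < count_low" "count_low \<le> mu - deviation"
    and "mu * (1 - sqrt u * w) < count_low" "0 < 1 - sqrt u * w"
    and "1 \<le> count_low" "count_high \<le> 2 * mu" "count_low \<le> mu"
    and "(deviation + 1)^2 \<le> mu^2 * u * w^2" "0 < deviation" "1 \<le> real count_high - real count_low"
proof -
  have mu0: "0 < mu" using mu by simp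
  have u0: "0 < u" using L mu0 by (simp add: u_def)
  have su: "0 < sqrt u" "(sqrt u)^2 = u" using u0 by auto
  show d0: "0 < deviation" using g1 mu0 su by (simp add: deviation_def u_def)
  have H: "sqrt u * w \<le> 1/2" using small by (simp add: u_def w_def)
  then show "0 < 1 - sqrt u * w" by simp
  have "mu * sqrt u * sqrt u = L" using u0 mu0 L by (simp add: u_def mult.assoc)
  then have rw: "mu * sqrt u * w = deviation + L"
    by (simp add: w_def deviation_def u_def algebra_simps)
  then have d1: "deviation + 1 \<le> mu * (sqrt u * w)" using L by simp
  have half: "mu * (1 - sqrt u * w) \<ge> mu / 2" using H mu0 by (simp add: right_diff_distrib)
  have low: "mu - deviation - 1 \<ge> mu * (1 - sqrt u * w)" using d1 by (simp add: algebra_simps)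
  show "mu + deviation \<le> count_high" "count_high < mu + deviation + 1"
    using mu0 d0 unfolding count_high_def by linarith+
  show lo: "mu - deviation - 1 < count_low" "count_low \<le> mu - deviation"
    using low half mu0 unfolding count_low_def by linarith+
  then show "mu * (1 - sqrt u * w) < count_low" using low by linarith
  then show "1 \<le> count_low" using half mu by linarith
  show "count_low \<le> mu" using lo d0 by linarith
  have "real count_low < real count_high"
    using lo d0 mu0 unfolding count_high_def by linarith
  then have "count_low + 1 \<le> count_high" by simp
  then have "real (count_low + 1) \<le> real count_high" by (simp only: of_nat_le_iff)
  then show "1 \<le> real count_high - real count_low" by simp
  have "mu * (sqrt u * w) \<le> mu * (1/2)" using H mu0 by (intro mult_left_mono) auto
  then show "count_high \<le> 2 * mu" using d1 mu0 d0 unfolding count_high_def by linarith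
  have "(deviation + 1)^2 \<le> (mu * (sqrt u * w))^2" using d1 d0 by (intro power_mono) auto
  then show "(deviation + 1)^2 \<le> mu^2 * u * w^2" using su by (simp add: power_mult_distrib)
qed

lemma threshold_le_count_gap:
  fixes g :: real
  assumes g: "0 < g" and F: "threshold_scaled g (L / mu) \<le> 2 * sqrt g1"
  defines "cnt \<equiv> real count_high + real count_low"
  shows "sqrt (2*g*L*(cnt + sqrt (2*g*L*cnt) + 3*g*L)) + g*L/3 \<le> real count_high - real count_low"
proof -
  define u where "u = L / mu"
  define r where "r = mu * sqrt u"
  note B = gap_counts_bounds[folded u_def]
  have mu0: "0 < mu" using mu by simp
  have u0: "0 < u" using L mu0 by (simp add: u_def)
  have r0: "0 < r" using mu0 u0 by (simp add: r_def)
  have Lu: "L = mu * u" using mu0 by (simp add: u_def)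
  have rsu: "r * sqrt u = L" using u0 by (simp add: r_def Lu mult.assoc)
  have cnt: "cnt \<le> mu * (2 + u)" using B L Lu unfolding cnt_def by (simp add: algebra_simps)
  have "sqrt (2*g*L*cnt) \<le> sqrt (2*g*L*(mu*(2+u)))"
    using cnt g L by (intro real_sqrt_le_mono mult_left_mono) auto
  then have "sqrt (2*g*L*(cnt + sqrt (2*g*L*cnt) + 3*g*L))
      \<le> sqrt (2*g*L*(mu*(2+u) + sqrt (2*g*L*(mu*(2+u))) + 3*g*L))"
    using cnt g L by (intro real_sqrt_le_mono mult_left_mono add_mono) auto
  also have "\<dots> = r * sqrt (2*g*(2 + u + sqrt (2*g*u*(2+u)) + 3*g*u))"
  proof -
    have "2*g*L*(mu*(2+u)) = mu^2 * (2*g*u*(2+u))" by (simp add: Lu power2_eq_square algebra_simps)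
    then have "sqrt (2*g*L*(mu*(2+u))) = sqrt (mu^2) * sqrt (2*g*u*(2+u))"
      by (simp only: real_sqrt_mult)
    then have i1: "sqrt (2*g*L*(mu*(2+u))) = mu * sqrt (2*g*u*(2+u))" using mu0 by simp
    have "2*g*L*(mu*(2+u) + sqrt (2*g*L*(mu*(2+u))) + 3*g*L)
        = r^2 * (2*g*(2 + u + sqrt (2*g*u*(2+u)) + 3*g*u))"
      unfolding i1 r_def using u0 by (simp add: Lu power_mult_distrib power2_eq_square algebra_simps)
    then have "sqrt (2*g*L*(mu*(2+u) + sqrt (2*g*L*(mu*(2+u))) + 3*g*L))
        = sqrt (r^2) * sqrt (2*g*(2 + u + sqrt (2*g*u*(2+u)) + 3*g*u))"
      by (simp only: real_sqrt_mult)
    then show ?thesis using r0 by simp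
  qed
  finally have "sqrt (2*g*L*(cnt + sqrt (2*g*L*cnt) + 3*g*L)) + g*L/3 \<le> r * threshold_scaled g u"
    using rsu[symmetric] by (simp add: threshold_scaled_def algebra_simps)
  also have "\<dots> \<le> r * (2 * sqrt g1)" using F r0 by (simp add: u_def)
  also have "\<dots> = 2 * deviation" by (simp add: r_def u_def deviation_def)
  also have "\<dots> \<le> real count_high - real count_low" using B by linarith
  finally show ?thesis .
qed

lemma rate_sum_le:
  fixes g2 :: real
  assumes G: "rate_scaled g1 (L / mu) \<le> g2"
  shows "poisson_rate mu count_high + poisson_rate mu count_low \<le> g2 * L"
proof -
  define u where "u = L / mu"
  define w where "w = sqrt g1 + sqrt u"
  note B = gap_counts_bounds[folded u_def, folded w_def]
  have mu0: "0 < mu" using mu by simp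
  have u0: "0 < u" using L mu0 by (simp add: u_def)
  have "poisson_rate mu count_high \<le> (count_high - mu)^2 / (2*mu)"
    using B mu0 by (intro poisson_rate_above_mean) auto
  also have "\<dots> \<le> (deviation + 1)^2 / (2*mu)"
    using B mu0 by (intro divide_right_mono power_mono) auto
  also have "\<dots> \<le> mu^2 * u * w^2 / (2*mu)" using B mu0 by (intro divide_right_mono) auto
  also have "\<dots> = mu * u * (w^2/2)" using mu0 by (simp add: power2_eq_square)
  finally have high: "poisson_rate mu count_high \<le> mu * u * (w^2/2)" .
  have "poisson_rate mu count_low \<le> (mu - count_low)^2 / (2 * real count_low)"
    using B by (intro poisson_rate_below_mean) auto
  also have "\<dots> \<le> (deviation + 1)^2 / (2*(mu * (1 - sqrt u * w)))"
    using B mu0 by (intro frac_le power_mono) auto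
  also have "\<dots> \<le> mu^2 * u * w^2 / (2*(mu * (1 - sqrt u * w)))"
    using B mu0 by (intro divide_right_mono) auto
  also have "\<dots> = mu * u * (w^2/(2*(1 - sqrt u * w)))" using mu0 B by (simp add: power2_eq_square)
  finally have low: "poisson_rate mu count_low \<le> mu * u * (w^2/(2*(1 - sqrt u * w)))" .
  have "poisson_rate mu count_high + poisson_rate mu count_low \<le> mu * u * rate_scaled g1 u"
    using high low by (simp add: rate_scaled_def w_def algebra_simps)
  also have "\<dots> \<le> mu * u * g2" using G mu0 u0 L by (intro mult_left_mono) (auto simp: u_def)
  finally show ?thesis using mu0 by (simp add: u_def mult.commute)
qed

end

definition thresholded_coeff :: "real \<Rightarrow> real \<Rightarrow> real multiset \<Rightarrow> int \<times> int \<Rightarrow> real" where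
  "thresholded_coeff gamma n N l = (if eta gamma n N l \<le> \<bar>beta_hat n N l\<bar> then beta_hat n N l else 0)"

lemma L2_loss_ge_level_coefficients:
  fixes n gamma :: real and N :: "real multiset" and j :: nat
  assumes "1 \<le> n" "j \<le> nat (j0 n)"
  shows "ennreal (\<Sum>k<2^j. (thresholded_coeff gamma n N (int j, int k))^2)
    \<le> (\<integral>\<^sup>+x. ennreal ((f_tilde_H n gamma N x - indicator {0..1} x)^2) \<partial>lborel)"
  using sum_haar_coeffs_sq_le_L2_dist[OF assms(2), of "thresholded_coeff gamma n N"] assms(1)
  by (simp add: f_tilde_H_def Gamma_n_eq_haar_levels thresholded_coeff_def)

lemma thresholded_coeff_sq_ge:
  fixes n gamma :: real and N :: "real multiset" and j cH cL :: nat
  assumes n1: "1 \<le> n" and g: "0 < gamma"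
    and counts: "count_in (left_half j k) N = cH" "count_in (right_half j k) N = cL"
    and gap: "1 \<le> real cH - real cL"
    and thr: "sqrt (2*gamma*ln n*((real cH + real cL) + sqrt (2*gamma*ln n*(real cH + real cL))
                + 3*gamma*ln n)) + gamma*ln n/3 \<le> real cH - real cL"
  shows "2^j / n^2 \<le> (thresholded_coeff gamma n N (int j, k))^2"
proof -
  have "thresholded_coeff gamma n N (int j, k) = beta_hat n N (int j, k)"
    using coefficient_kept[OF n1 g, of j k N] thr by (simp add: thresholded_coeff_def counts)
  then have "(thresholded_coeff gamma n N (int j, k))^2 = 2^j * (real cH - real cL)^2 / n^2"
    by (simp add: beta_hat_eq_half_counts counts power_divide power_mult_distrib powr_half_sq)
  also have "\<dots> \<ge> 2^j / n^2" using gap by (simp add: divide_right_mono one_le_power)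
  finally show ?thesis .
qed

lemma expected_loss_ge_level_events:
  fixes M :: "'w measure" and N :: "'w \<Rightarrow> real multiset" and n j cH cL :: nat and gamma :: real
  assumes pp: "poisson_process M N (\<lambda>x. real n * indicator {0..1} x)"
    and n1: "1 \<le> real n" and g: "0 < gamma" and j: "j \<le> nat (j0 (real n))"
    and gap: "1 \<le> real cH - real cL"
    and thr: "sqrt (2*gamma*ln n*((real cH + real cL) + sqrt (2*gamma*ln n*(real cH + real cL))
                + 3*gamma*ln n)) + gamma*ln n/3 \<le> real cH - real cL"
  defines "mu \<equiv> real n / 2^(Suc j)"
  shows "ennreal (2^j * (2^j / (real n)^2) * ((mu^cH / fact cH * exp (- mu)) * (mu^cL / fact cL * exp (- mu))))
    \<le> (\<integral>\<^sup>+\<omega>. (\<integral>\<^sup>+x. ennreal ((f_tilde_H (real n) gamma (N \<omega>) x - indicator {0..1} x)\<^sup>2) \<partial>lborel) \<partial>M)"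
proof -
  interpret prob_space M using pp by (simp add: poisson_process_def)
  define p where "p = (mu^cH / fact cH * exp (- mu)) * (mu^cL / fact cL * exp (- mu))"
  define v where "v = 2^j / (real n)^2"
  define E where "E = (\<lambda>k. {\<omega> \<in> space M. count_in (left_half j (int k)) (N \<omega>) = cH
                                     \<and> count_in (right_half j (int k)) (N \<omega>) = cL})"
  define W where "W = (\<lambda>\<omega> k. thresholded_coeff gamma n (N \<omega>) (int j, int k))"
  have E: "E k \<in> sets M" "measure M (E k) = p" if "k < 2^j" for k
    using prob_half_counts[OF pp that] unfolding E_def p_def mu_def by auto
  have v0: "0 \<le> v" and p0: "0 \<le> p" by (simp_all add: v_def p_def mu_def)
  have kept: "v * indicator (E k) \<omega> \<le> (W \<omega> k)^2" for k \<omega>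
    using thresholded_coeff_sq_ge[OF n1 g _ _ gap thr, of j "int k" "N \<omega>"]
    by (cases "\<omega> \<in> E k") (auto simp: E_def W_def v_def)
  have "ennreal (2^j * (v * p)) = (\<Sum>k<(2::nat)^j. ennreal (v * p))"
    using v0 p0 by (simp add: ennreal_of_nat_eq_real_of_nat ennreal_mult[symmetric])
  also have "\<dots> = (\<Sum>k<2^j. \<integral>\<^sup>+\<omega>. ennreal v * indicator (E k) \<omega> \<partial>M)"
    using E v0 p0 by (intro sum.cong refl) (simp add: nn_integral_cmult_indicator emeasure_eq_measure ennreal_mult)
  also have "\<dots> = (\<integral>\<^sup>+\<omega>. (\<Sum>k<2^j. ennreal v * indicator (E k) \<omega>) \<partial>M)"
    using E by (intro nn_integral_sum[symmetric]) auto
  also have "\<dots> \<le> (\<integral>\<^sup>+\<omega>. ennreal (\<Sum>k<2^j. (W \<omega> k)^2) \<partial>M)"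
  proof (rule nn_integral_mono)
    fix \<omega>
    have "(\<Sum>k<2^j. ennreal v * indicator (E k) \<omega>) = (\<Sum>k<2^j. ennreal (v * indicator (E k) \<omega>))"
      by (intro sum.cong refl) (simp add: indicator_def)
    also have "\<dots> = ennreal (\<Sum>k<2^j. v * indicator (E k) \<omega>)"
      using v0 by (intro sum_ennreal) simp
    also have "\<dots> \<le> ennreal (\<Sum>k<2^j. (W \<omega> k)^2)"
      using kept by (intro ennreal_leI sum_mono)
    finally show "(\<Sum>k<2^j. ennreal v * indicator (E k) \<omega>) \<le> ennreal (\<Sum>k<2^j. (W \<omega> k)^2)" .
  qed
  also have "\<dots> \<le> (\<integral>\<^sup>+\<omega>. (\<integral>\<^sup>+x. ennreal ((f_tilde_H (real n) gamma (N \<omega>) x - indicator {0..1} x)\<^sup>2) \<partial>lborel) \<partial>M)"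
    using L2_loss_ge_level_coefficients n1 j unfolding W_def by (intro nn_integral_mono) simp
  finally show ?thesis by (simp add: v_def p_def algebra_simps)
qed

lemma exists_level_with_mean:
  fixes x ne :: real
  assumes x1: "1 \<le> x" and ne: "4 \<le> ne" "4 * ne \<le> x"
  obtains j where "j \<le> nat (j0 x)" "ne/2 \<le> x / 2^(Suc j)" "x / 2^(Suc j) < 2*ne" "x / (4*ne) < 2^j"
proof -
  define jn where "jn = nat (j0 x)"
  have J: "2^jn \<le> x" "x < 2 * 2^jn" using j0_bounds[OF x1] by (simp_all add: jn_def)
  define t where "t = nat \<lceil>log 2 ne\<rceil>"
  have lg0: "0 \<le> log 2 ne" using ne by simp
  have "log 2 ne \<le> real t" "real t < log 2 ne + 1" unfolding t_def using lg0 by linarith+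
  then have "2 powr (log 2 ne) \<le> 2 powr (real t)" "2 powr (real t) < 2 powr (log 2 ne + 1)"
    by (auto intro: powr_mono powr_less_mono)
  then have T: "ne \<le> 2^t" "2^t < 2 * ne" using ne by (simp_all add: powr_realpow powr_add)
  then have "(2::real)^t < 2^jn" using ne J by linarith
  then have tj: "t < jn" by (simp add: power_strict_increasing_iff)
  define j where "j = jn - t"
  have jt: "(2::real)^j * 2^t = 2^jn" unfolding j_def using tj by (simp add: power_add[symmetric])
  have mu: "x / 2^(Suc j) = x * 2^t / (2 * 2^jn)" unfolding jt[symmetric] by (simp add: field_simps)
  show ?thesis
  proof
    show "j \<le> nat (j0 x)" by (simp add: j_def jn_def)
    have "ne/2 \<le> 2^t/2" using T by simp
    also have "2^t / 2 \<le> x * 2^t / (2 * 2^jn)" using J by (simp add: field_simps)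
    finally show "ne/2 \<le> x / 2^(Suc j)" unfolding mu .
    have "x * 2^t / (2 * 2^jn) < 2^t" using J by (simp add: field_simps)
    then show "x / 2^(Suc j) < 2*ne" unfolding mu using T by linarith
    have "x / (4*ne) < 2 * 2^jn / (2 * 2^t)"
      using J T x1 by (intro frac_less2) auto
    also have "\<dots> = 2^j" using jt by (simp add: field_simps)
    finally show "x / (4*ne) < 2^j" .
  qed
qed

lemma level_event_bound:
  fixes x eps mu g2 :: real and j cH cL :: nat
  assumes x1: "1 \<le> x" and mu: "0 < mu" "mu < 2 * x powr eps"
    and level: "x / (4 * x powr eps) < 2^j"
    and counts: "1 \<le> cH" "1 \<le> cL" "real cH \<le> 2*mu" "real cL \<le> mu"
    and rate: "poisson_rate mu cH + poisson_rate mu cL \<le> g2 * ln x"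
  shows "1/(128 * (exp 1)^2) / x powr (g2 + 4*eps)
    \<le> 2^j * (2^j / x^2) * ((mu^cH / fact cH * exp (- mu)) * (mu^cL / fact cL * exp (- mu)))"
proof -
  define ne where "ne = x powr eps"
  define e where "e = exp (1::real)"
  have x0: "0 < x" and ne0: "0 < ne" and e0: "0 < e" using x1 by (simp_all add: ne_def e_def)
  have c0: "0 < real cH" "0 < real cL" using counts by auto
  have "exp (- (poisson_rate mu cH + poisson_rate mu cL)) / (e^2 * (real cH * real cL))
      = exp (- poisson_rate mu cH) / (e * real cH) * (exp (- poisson_rate mu cL) / (e * real cL))"
    by (simp add: exp_add[symmetric] power2_eq_square field_simps)
  also have "\<dots> \<le> (mu^cH / fact cH * exp (- mu)) * (mu^cL / fact cL * exp (- mu))"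
    unfolding e_def using poisson_pmf_ge_exp_rate mu counts c0 by (intro mult_mono) auto
  finally have P: "exp (- (poisson_rate mu cH + poisson_rate mu cL)) / (e^2 * (real cH * real cL))
      \<le> (mu^cH / fact cH * exp (- mu)) * (mu^cL / fact cL * exp (- mu))" .
  have "real cH * real cL \<le> (2*mu) * (2*ne)" using counts mu c0 by (intro mult_mono) (auto simp: ne_def)
  also have "\<dots> \<le> 8 * ne^2" using mu ne0 by (simp add: ne_def power2_eq_square)
  finally have "real cH * real cL \<le> 8 * ne^2" .
  moreover have "x powr (- g2) \<le> exp (- (poisson_rate mu cH + poisson_rate mu cL))"
    using rate x0 by (simp add: powr_def)
  ultimately have "x powr (- g2) / (e^2 * (8 * ne^2))
      \<le> exp (- (poisson_rate mu cH + poisson_rate mu cL)) / (e^2 * (real cH * real cL))"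
    using c0 e0 mu ne0 by (intro frac_le) (auto simp: power2_eq_square)
  also note P
  finally have P': "x powr (- g2) / (e^2 * (8 * ne^2))
      \<le> (mu^cH / fact cH * exp (- mu)) * (mu^cL / fact cL * exp (- mu))" .
  have "(x / (4*ne))^2 \<le> (2^j)^2" using level x0 ne0 by (intro power_mono) (auto simp: ne_def)
  then have J: "1 / (16 * ne^2) \<le> 2^j * (2^j / x^2)"
    using x0 by (simp add: power_divide power_mult_distrib power2_eq_square field_simps)
  have "1/(128 * e^2) / x powr (g2 + 4*eps) = 1 / (16 * ne^2) * (x powr (- g2) / (e^2 * (8 * ne^2)))"
  proof -
    have "ne^2 * ne^2 = x powr (4*eps)" unfolding ne_def using x0
      by (simp add: power2_eq_square powr_add[symmetric])
    then show ?thesis using ne0 e0 x0 by (simp add: powr_add powr_minus_divide field_simps power2_eq_square)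
  qed
  also have "\<dots> \<le> 2^j * (2^j / x^2) * ((mu^cH / fact cH * exp (- mu)) * (mu^cL / fact cL * exp (- mu)))"
    using J P' e0 ne0 by (intro mult_mono) auto
  finally show ?thesis by (simp add: e_def)
qed

lemma expected_loss_lower_bound:
  fixes M :: "'w measure" and N :: "'w \<Rightarrow> real multiset" and n :: nat and gamma g1 g2 eps u0 :: real
  assumes gamma: "0 < gamma" and g1: "0 < g1"
    and scaled: "\<And>u. 0 < u \<Longrightarrow> u < u0 \<Longrightarrow> threshold_scaled gamma u \<le> 2 * sqrt g1
                   \<and> sqrt u * (sqrt g1 + sqrt u) \<le> 1/2 \<and> rate_scaled g1 u \<le> g2"
    and large: "1 \<le> ln n" "4 \<le> n powr eps" "4 * n powr eps \<le> n" "2 * ln n / n powr eps < u0"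
    and pp: "poisson_process M N (\<lambda>x. real n * indicator {0..1} x)"
  shows "ennreal (1/(128 * (exp 1)^2) / real n powr (g2 + 4*eps))
    \<le> (\<integral>\<^sup>+\<omega>. (\<integral>\<^sup>+x. ennreal ((f_tilde_H (real n) gamma (N \<omega>) x - indicator {0..1} x)\<^sup>2) \<partial>lborel) \<partial>M)"
proof -
  define ne where "ne = real n powr eps"
  have n1: "1 \<le> real n" using large by (simp add: ne_def)
  obtain j where j: "j \<le> nat (j0 n)" "ne/2 \<le> n / 2^(Suc j)" "n / 2^(Suc j) < 2*ne" "n / (4*ne) < 2^j"
    using exists_level_with_mean[OF n1 large(2,3)[folded ne_def]] .
  define mu where "mu = real n / 2^(Suc j)"
  define L where "L = ln (real n)"
  have mu2: "2 \<le> mu" using j(2) large by (simp add: mu_def ne_def)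
  have "L / mu \<le> L / (ne/2)" using j(2) large mu2 by (intro divide_left_mono) (auto simp: mu_def L_def ne_def)
  also have "\<dots> = 2 * L / ne" by simp
  finally have u: "0 < L / mu" "L / mu < u0"
    using large mu2 unfolding L_def ne_def by (simp, linarith)
  note bounds = scaled[OF u]
  interpret gap_counts g1 L mu
    using g1 large(1) mu2 bounds by unfold_locales (simp_all add: L_def)
  have "ennreal (1/(128 * (exp 1)^2) / real n powr (g2 + 4*eps))
      \<le> ennreal (2^j * (2^j / (real n)^2) * ((mu^count_high / fact count_high * exp (- mu))
           * (mu^count_low / fact count_low * exp (- mu))))"
    using level_event_bound[OF n1 _ _ j(4)[unfolded ne_def], of mu count_high count_low g2]
      gap_counts_bounds rate_sum_le[of g2] bounds mu2 j(3)
    by (intro ennreal_leI) (simp add: mu_def ne_def L_def)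
  also have "\<dots> \<le> (\<integral>\<^sup>+\<omega>. (\<integral>\<^sup>+x. ennreal ((f_tilde_H (real n) gamma (N \<omega>) x - indicator {0..1} x)\<^sup>2) \<partial>lborel) \<partial>M)"
    using expected_loss_ge_level_events[OF pp n1 gamma j(1)] gap_counts_bounds
      threshold_le_count_gap[OF gamma] bounds
    by (simp add: mu_def L_def)
  finally show ?thesis .
qed

lemma eventually_large_n:
  fixes eps u0 :: real
  assumes "0 < eps" "eps < 1" "0 < u0"
  shows "eventually (\<lambda>n. 1 \<le> ln (real n) \<and> 4 \<le> real n powr eps \<and> 4 * real n powr eps \<le> real n
           \<and> 2 * ln (real n) / real n powr eps < u0) sequentially"
  using assms by (intro eventually_conj; real_asymp)

theorem theorem3:
  fixes gamma :: real
  assumes "0 < gamma" and "gamma < 1"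
  shows "\<exists>delta::real. delta < 1 \<and> (\<exists>c::real. c > 0 \<and> (\<exists>n0::nat. \<forall>n::nat. n \<ge> n0 \<longrightarrow>
           (\<forall>(M :: 'w measure) N.
              poisson_process M N (\<lambda>x. real n * indicator {0..1} x) \<longrightarrow>
              (\<integral>\<^sup>+\<omega>. (\<integral>\<^sup>+x. ennreal ((f_tilde_H (real n) gamma (N \<omega>) x - indicator {0..1} x)\<^sup>2) \<partial>lborel) \<partial>M)
                \<ge> ennreal (c / real n powr delta))))"
proof -
  define g1 where "g1 = gamma + (1 - gamma)/4"
  define g2 where "g2 = gamma + (1 - gamma)/2"
  define eps where "eps = (1 - gamma)/16"
  have g: "gamma < g1" "g1 < g2" "0 < g1" and eps: "0 < eps" "eps < 1" and delta: "g2 + 4*eps < 1"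
    using assms by (simp_all add: g1_def g2_def eps_def field_simps)
  obtain u0 where u0: "0 < u0" and scaled: "\<And>u. 0 < u \<Longrightarrow> u < u0 \<Longrightarrow> threshold_scaled gamma u \<le> 2 * sqrt g1
      \<and> sqrt u * (sqrt g1 + sqrt u) \<le> 1/2 \<and> rate_scaled g1 u \<le> g2"
    using eventually_scaled_bounds[OF assms(1) g(1,2)] unfolding eventually_at_right_field by blast
  obtain n0 where large: "\<And>n. n0 \<le> n \<Longrightarrow> 1 \<le> ln (real n) \<and> 4 \<le> real n powr eps
      \<and> 4 * real n powr eps \<le> real n \<and> 2 * ln (real n) / real n powr eps < u0"
    using eventually_large_n[OF eps u0] unfolding eventually_sequentially by blast
  define c :: real where "c = 1 / (128 * (exp 1)^2)"
  have "ennreal (c / real n powr (g2 + 4*eps))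
      \<le> (\<integral>\<^sup>+\<omega>. (\<integral>\<^sup>+x. ennreal ((f_tilde_H (real n) gamma (N \<omega>) x - indicator {0..1} x)\<^sup>2) \<partial>lborel) \<partial>M)"
    if "n0 \<le> n" "poisson_process M N (\<lambda>x. real n * indicator {0..1} x)" for n and M :: "'w measure" and N
    using large[OF that(1)] expected_loss_lower_bound[OF assms(1) g(3) scaled _ _ _ _ that(2)]
    by (simp add: c_def)
  moreover have "0 < c" by (simp add: c_def)
  ultimately show ?thesis using delta by blast
qed

end
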